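(* Let $D\subseteq\mathbb{R}^n$ be nonempty, convex, closed and bounded, and let $f:\mathbb{R}^n\to\mathbb{R}$ be continuously differentiable. Consider Method (CGMI) (described in the context). Then: (i) the number of changes of the index $k$ at each stage $p$ is finite, so the sequence $\{w^p\}_{p\ge0}$ is infinite; (ii) the sequence $\{w^p\}$ has limit points, and all of them belong to $D^0$; (iii) if, in addition, $f$ is pseudo-convex on $D$, then all limit points of $\{w^p\}$ belong to $D^*$, and $\lim_{p\to\infty}f(w^p)=f^*$.
   Context: Notation: $f'(x)$ is the gradient of $f$; $\mathbb{Z}_+$ is the set of non-negative integers. The problem is $\min_{x\in D}f(x)$; $f^*=\inf_{x\in D}f(x)$ and $D^*$ is its solution set. $D^0$ is the set of $x^*\in D$ with $\langle f'(x^* ),x-x^*\rangle\ge0$ for all $x\in D$. $\mu(x)=\max_{y\in D}\langle f'(x),x-y\rangle$. A differentiable $\varphi$ is pseudo-convex on $D$ if for all $x,y\in D$, $\langle\varphi'(x),y-x\rangle\ge0$ implies $\varphi(y)\ge\varphi(x)$. Method (CGMI): Choose $w^0\in D$, $\beta\in(0,1)$, $\theta\in(0,1)$, and a positive sequence $\{\delta_p\}$ with $\delta_p\to0$. Set $p=1$. (Step 0) Set $k=0$, $x^0=w^{p-1}$. (Step 1) If $\mu(x^k)<\delta_p$, set $w^p=x^k$, replace $p$ by $p+1$ and go to Step 0 (restart). Otherwise choose any $z^k\in D$ with $\langle f'(x^k),x^k-z^k\rangle\ge\delta_p$. (Step 2) Set $d^k=z^k-x^k$, let $m$ be the smallest number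 in $\mathbb{Z}_+$ with $f(x^k+\theta^m d^k)\le f(x^k)+\beta\theta^m\langle f'(x^k),d^k\rangle$, set $\lambda_k=\theta^m$, $x^{k+1}=x^k+\lambda_k d^k$, $k=k+1$, and go to Step 1. The iterations with a fixed value of $p$ form stage $p$. *)

theory Defs
  imports "HOL-Analysis.Analysis"
begin

definition mu_gap :: "('a::euclidean_space \<Rightarrow> 'a) \<Rightarrow> 'a set \<Rightarrow> 'a \<Rightarrow> real" where
  "mu_gap f' D x = (SUP y\<in>D. f' x \<bullet> (x - y))"

definition stat_set :: "('a::euclidean_space \<Rightarrow> 'a) \<Rightarrow> 'a set \<Rightarrow> 'a set" where
  "stat_set f' D = {xs \<in> D. \<forall>y\<in>D. f' xs \<bullet> (y - xs) \<ge> 0}"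

definition opt_val :: "('a \<Rightarrow> real) \<Rightarrow> 'a set \<Rightarrow> real" where
  "opt_val f D = (INF x\<in>D. f x)"

definition sol_set :: "('a \<Rightarrow> real) \<Rightarrow> 'a set \<Rightarrow> 'a set" where
  "sol_set f D = {x \<in> D. f x = opt_val f D}"

definition pseudo_convex_on :: "('a::euclidean_space \<Rightarrow> real) \<Rightarrow> ('a \<Rightarrow> 'a) \<Rightarrow> 'a set \<Rightarrow> bool" where
  "pseudo_convex_on f f' D \<longleftrightarrow>
     (\<forall>x\<in>D. \<forall>y\<in>D. f' x \<bullet> (y - x) \<ge> 0 \<longrightarrow> f y \<ge> f x)"

definition armijo_ok :: "('a::euclidean_space \<Rightarrow> real) \<Rightarrow> ('a \<Rightarrow> 'a) \<Rightarrow> real \<Rightarrow> real \<Rightarrow> 'a \<Rightarrow> 'a \<Rightarrow> nat \<Rightarrow> bool" where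
  "armijo_ok f f' \<beta> \<theta> x z m \<longleftrightarrow>
     f (x + (\<theta> ^ m) *\<^sub>R (z - x)) \<le> f x + \<beta> * \<theta> ^ m * (f' x \<bullet> (z - x))"

definition armijo_step :: "('a::euclidean_space \<Rightarrow> real) \<Rightarrow> ('a \<Rightarrow> 'a) \<Rightarrow> real \<Rightarrow> real \<Rightarrow> 'a \<Rightarrow> 'a \<Rightarrow> 'a \<Rightarrow> bool" where
  "armijo_step f f' \<beta> \<theta> x z x' \<longleftrightarrow>
     (\<exists>m. armijo_ok f f' \<beta> \<theta> x z m \<and> (\<forall>m'<m. \<not> armijo_ok f f' \<beta> \<theta> x z m') \<and>
          x' = x + (\<theta> ^ m) *\<^sub>R (z - x))"

definition cgmi_iter :: "('a::euclidean_space \<Rightarrow> real) \<Rightarrow> ('a \<Rightarrow> 'a) \<Rightarrow> 'a set \<Rightarrow> real \<Rightarrow> real \<Rightarrow> real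
     \<Rightarrow> 'a \<Rightarrow> 'a \<Rightarrow> 'a \<Rightarrow> bool" where
  "cgmi_iter f f' D \<beta> \<theta> dl x z x' \<longleftrightarrow>
     \<not> mu_gap f' D x < dl \<and> z \<in> D \<and> f' x \<bullet> (x - z) \<ge> dl \<and> armijo_step f f' \<beta> \<theta> x z x'"

definition cgmi_stage :: "('a::euclidean_space \<Rightarrow> real) \<Rightarrow> ('a \<Rightarrow> 'a) \<Rightarrow> 'a set \<Rightarrow> real \<Rightarrow> real \<Rightarrow> real
     \<Rightarrow> 'a \<Rightarrow> 'a \<Rightarrow> bool" where
  "cgmi_stage f f' D \<beta> \<theta> dl w w' \<longleftrightarrow>
     (\<exists>K x z. x 0 = w \<and> (\<forall>k<K. cgmi_iter f f' D \<beta> \<theta> dl (x k) (z k) (x (Suc k))) \<and>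
              mu_gap f' D (x K) < dl \<and> w' = x K)"

definition cgmi_run :: "('a::euclidean_space \<Rightarrow> real) \<Rightarrow> ('a \<Rightarrow> 'a) \<Rightarrow> 'a set \<Rightarrow> real \<Rightarrow> real
     \<Rightarrow> (nat \<Rightarrow> real) \<Rightarrow> (nat \<Rightarrow> 'a) \<Rightarrow> bool" where
  "cgmi_run f f' D \<beta> \<theta> \<delta> w \<longleftrightarrow>
     w 0 \<in> D \<and> (\<forall>p. cgmi_stage f f' D \<beta> \<theta> (\<delta> (Suc p)) (w p) (w (Suc p)))"

definition is_limit_point :: "(nat \<Rightarrow> 'a::metric_space) \<Rightarrow> 'a \<Rightarrow> bool" where
  "is_limit_point w l \<longleftrightarrow> (\<exists>r. strict_mono r \<and> (w \<circ> r) \<longlonglongrightarrow> l)"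

end

theory Submission
  imports Defs
begin

text \<open>Since \<open>f'\<close> is uniformly continuous on the compact set \<open>D\<close>, all step sizes up to some
  \<open>\<eta>(\<delta>) > 0\<close> pass the Armijo test along any direction \<open>z - x\<close> with gap
  \<open>\<langle>f'(x), x - z\<rangle> \<ge> \<delta>\<close>. Hence, within a stage with tolerance \<open>\<delta>\<close>, every iteration decreases \<open>f\<close>
  by at least a fixed \<open>c(\<delta>) > 0\<close>, and as \<open>f\<close> is bounded below on \<open>D\<close> each stage terminates.
  The stage end points satisfy \<open>\<mu>(w\<^sup>p) < \<delta>\<^sub>p \<rightarrow> 0\<close>, so by continuity of \<open>f'\<close> every limit point
  is stationary. Finally \<open>f(w\<^sup>p)\<close> is nonincreasing, so it converges to the value of \<open>f\<close> at any
  limit point, which under pseudo-convexity is a minimiser.\<close>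

lemma has_real_derivative_along_line:
  assumes "\<And>x. (f has_derivative (\<lambda>h. f' x \<bullet> h)) (at x)"
  shows "((\<lambda>s. f (x + s *\<^sub>R d)) has_real_derivative (f' (x + s *\<^sub>R d) \<bullet> d)) (at s)"
proof -
  have "((\<lambda>s. x + s *\<^sub>R d) has_derivative (\<lambda>h. h *\<^sub>R d)) (at s)"
    by (auto intro!: derivative_eq_intros)
  from has_derivative_compose[OF this assms]
  show ?thesis unfolding has_field_derivative_def
    by (rule has_derivative_eq_rhs) (auto simp: mult.commute)
qed

lemma mean_value_along_line:
  assumes "\<And>x. (f has_derivative (\<lambda>h. f' x \<bullet> h)) (at x)" and "0 < t"
  obtains s where "0 < s" "s < t" "f (x + t *\<^sub>R d) - f x = t * (f' (x + s *\<^sub>R d) \<bullet> d)"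
  using MVT2[OF \<open>0 < t\<close>, of "\<lambda>s. f (x + s *\<^sub>R d)" "\<lambda>s. f' (x + s *\<^sub>R d) \<bullet> d"]
    has_real_derivative_along_line[OF assms(1)] that
  by auto

lemma decseq_tendsto_subseq_limit:
  fixes u :: "nat \<Rightarrow> real"
  assumes dec: "decseq u" and r: "strict_mono r" and lim: "(u \<circ> r) \<longlonglongrightarrow> L"
  shows "u \<longlonglongrightarrow> L"
proof -
  have "L \<le> u i" for i
  proof (rule LIMSEQ_le_const2[OF lim], intro exI allI impI)
    fix n assume "i \<le> n"
    then have "i \<le> r n" using seq_suble[OF r, of n] by linarith
    then show "(u \<circ> r) n \<le> u i" using dec by (simp add: decseq_def)
  qed
  then obtain L' where L': "u \<longlonglongrightarrow> L'" using decseq_convergent[OF dec] by metis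
  have "L' = L" using LIMSEQ_unique[OF LIMSEQ_subseq_LIMSEQ[OF L' r] lim] .
  with L' show ?thesis by simp
qed

lemma stationary_point_in_sol_set:
  assumes "pseudo_convex_on f f' D" and "l \<in> stat_set f' D"
  shows "l \<in> sol_set f D"
proof -
  have lD: "l \<in> D" and min: "\<forall>y\<in>D. f l \<le> f y"
    using assms unfolding stat_set_def pseudo_convex_on_def by auto
  have "opt_val f D = f l" unfolding opt_val_def
    by (rule cInf_eq_minimum) (use lD min in auto)
  with lD show ?thesis unfolding sol_set_def by simp
qed

locale cgmi_setting =
  fixes D :: "'a::euclidean_space set" and f :: "'a \<Rightarrow> real" and f' :: "'a \<Rightarrow> 'a"
    and \<beta> \<theta> :: real
  assumes D_nonempty: "D \<noteq> {}" and convex_D: "convex D" and closed_D: "closed D"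
    and bounded_D: "bounded D"
    and deriv: "\<And>x. (f has_derivative (\<lambda>h. f' x \<bullet> h)) (at x)"
    and continuous_f': "continuous_on UNIV f'"
    and beta: "0 < \<beta>" "\<beta> < 1"
    and theta: "0 < \<theta>" "\<theta> < 1"
begin

lemma compact_D: "compact D"
  using closed_D bounded_D compact_eq_bounded_closed by blast

lemma continuous_on_f: "continuous_on A f"
  by (meson continuous_at_imp_continuous_on deriv has_derivative_continuous)

lemma f_bounded_below:
  obtains L where "\<And>y. y \<in> D \<Longrightarrow> L \<le> f y"
  using continuous_attains_inf[OF compact_D D_nonempty continuous_on_f] by blast

lemma mu_gap_attained:
  obtains y where "y \<in> D" "\<forall>y'\<in>D. f' x \<bullet> (x - y') \<le> f' x \<bullet> (x - y)"
    "mu_gap f' D x = f' x \<bullet> (x - y)"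
proof -
  have "continuous_on D (\<lambda>y. f' x \<bullet> (x - y))" by (intro continuous_intros)
  then obtain y where y: "y \<in> D" "\<forall>y'\<in>D. f' x \<bullet> (x - y') \<le> f' x \<bullet> (x - y)"
    using continuous_attains_sup[OF compact_D D_nonempty] by blast
  moreover have "mu_gap f' D x = f' x \<bullet> (x - y)" unfolding mu_gap_def
    by (rule cSup_eq_maximum) (use y in auto)
  ultimately show ?thesis using that by blast
qed

lemma inner_le_mu_gap: "y \<in> D \<Longrightarrow> f' x \<bullet> (x - y) \<le> mu_gap f' D x"
  by (metis mu_gap_attained)

lemma segment_in_D:
  assumes "x \<in> D" "z \<in> D" "0 \<le> t" "t \<le> 1"
  shows "x + t *\<^sub>R (z - x) \<in> D"
proof -
  have "x + t *\<^sub>R (z - x) = (1 - t) *\<^sub>R x + t *\<^sub>R z" by (simp add: algebra_simps)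
  then show ?thesis using convexD_alt[OF convex_D assms] by simp
qed

lemma D_diameter_bound:
  obtains B where "0 < B" "\<And>x z. x \<in> D \<Longrightarrow> z \<in> D \<Longrightarrow> norm (z - x) \<le> B"
proof -
  obtain B0 where B0: "0 < B0" "\<forall>x\<in>D. norm x \<le> B0" using bounded_D bounded_pos by blast
  have "norm (z - x) \<le> 2 * B0" if "x \<in> D" "z \<in> D" for x z
  proof -
    have "norm x \<le> B0" "norm z \<le> B0" using B0 that by auto
    then show ?thesis using norm_triangle_ineq4[of z x] by linarith
  qed
  with B0 show ?thesis using that[of "2 * B0"] by simp
qed

lemma gradient_uniformly_close_on_short_steps:
  assumes "0 < \<epsilon>"
  obtains \<eta> where "0 < \<eta>"
    "\<And>x z s. x \<in> D \<Longrightarrow> z \<in> D \<Longrightarrow> 0 \<le> s \<Longrightarrow> s < \<eta> \<Longrightarrow>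
       (f' (x + s *\<^sub>R (z - x)) - f' x) \<bullet> (z - x) \<le> \<epsilon>"
proof -
  obtain B where B: "0 < B" "\<And>x z. x \<in> D \<Longrightarrow> z \<in> D \<Longrightarrow> norm (z - x) \<le> B"
    using D_diameter_bound by blast
  have "uniformly_continuous_on D f'"
    by (rule compact_uniformly_continuous[OF continuous_on_subset[OF continuous_f'] compact_D]) simp
  then obtain e where e: "0 < e" "\<forall>a\<in>D. \<forall>b\<in>D. dist b a < e \<longrightarrow> dist (f' b) (f' a) < \<epsilon> / B"
    using assms B(1) unfolding uniformly_continuous_on_def by (metis divide_pos_pos)
  define \<eta> where "\<eta> = min 1 (e / B)"
  have close: "(f' (x + s *\<^sub>R (z - x)) - f' x) \<bullet> (z - x) \<le> \<epsilon>"
    if x: "x \<in> D" and z: "z \<in> D" and s: "0 \<le> s" "s < \<eta>" for x z s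
  proof -
    have "dist (x + s *\<^sub>R (z - x)) x = s * norm (z - x)" using s by (simp add: dist_norm)
    also have "\<dots> \<le> s * B" using B(2)[OF x z] s by (simp add: mult_left_mono)
    also have "\<dots> < e" using s B(1) by (simp add: \<eta>_def pos_less_divide_eq)
    finally have "norm (f' (x + s *\<^sub>R (z - x)) - f' x) < \<epsilon> / B"
      using e segment_in_D[OF x z s(1)] s x by (simp add: \<eta>_def dist_norm)
    then have "norm (f' (x + s *\<^sub>R (z - x)) - f' x) * norm (z - x) \<le> \<epsilon> / B * B"
      using B(2)[OF x z] B(1) assms by (intro mult_mono) auto
    with norm_cauchy_schwarz[of "f' (x + s *\<^sub>R (z - x)) - f' x" "z - x"] B(1)
    show ?thesis by simp
  qed
  show ?thesis using that[of \<eta>] close e B(1) by (simp add: \<eta>_def)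
qed

text \<open>The mean value theorem along the segment turns \<open>\<langle>f'(x), z - x\<rangle> \<le> -\<delta>\<close> and a gradient
  error of at most \<open>(1 - \<beta>) \<delta>\<close> into the Armijo inequality.\<close>

lemma armijo_ok_small_steps:
  assumes "0 < \<delta>"
  obtains \<eta> where "0 < \<eta>"
    "\<And>x z m. x \<in> D \<Longrightarrow> z \<in> D \<Longrightarrow> \<delta> \<le> f' x \<bullet> (x - z) \<Longrightarrow> \<theta> ^ m \<le> \<eta> \<Longrightarrow>
       armijo_ok f f' \<beta> \<theta> x z m"
proof -
  obtain \<eta> where \<eta>: "0 < \<eta>"
    and close: "\<And>x z s. x \<in> D \<Longrightarrow> z \<in> D \<Longrightarrow> 0 \<le> s \<Longrightarrow> s < \<eta> \<Longrightarrow>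
       (f' (x + s *\<^sub>R (z - x)) - f' x) \<bullet> (z - x) \<le> (1 - \<beta>) * \<delta>"
    using gradient_uniformly_close_on_short_steps[of "(1 - \<beta>) * \<delta>"] beta assms by auto
  have "armijo_ok f f' \<beta> \<theta> x z m"
    if x: "x \<in> D" and z: "z \<in> D" and gap: "\<delta> \<le> f' x \<bullet> (x - z)" and m: "\<theta> ^ m \<le> \<eta>"
    for x z m
  proof -
    define t where "t = \<theta> ^ m"
    have t: "0 < t" "t \<le> \<eta>" using theta m by (simp_all add: t_def)
    obtain s where s: "0 < s" "s < t"
      and mv: "f (x + t *\<^sub>R (z - x)) - f x = t * (f' (x + s *\<^sub>R (z - x)) \<bullet> (z - x))"
      using mean_value_along_line[OF deriv t(1)] by blast
    have descent: "f' x \<bullet> (z - x) \<le> - \<delta>" using gap by (simp add: inner_diff_right)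
    have "(f' (x + s *\<^sub>R (z - x)) - f' x) \<bullet> (z - x) \<le> (1 - \<beta>) * \<delta>"
      using close[OF x z] s t by simp
    also have "\<dots> \<le> (1 - \<beta>) * - (f' x \<bullet> (z - x))"
      using descent beta by (intro mult_left_mono) auto
    finally have "f' (x + s *\<^sub>R (z - x)) \<bullet> (z - x) \<le> \<beta> * (f' x \<bullet> (z - x))"
      by (simp add: inner_diff_left algebra_simps)
    then have "f (x + t *\<^sub>R (z - x)) - f x \<le> t * (\<beta> * (f' x \<bullet> (z - x)))"
      unfolding mv using t by (intro mult_left_mono) auto
    then show ?thesis unfolding armijo_ok_def t_def by (simp add: algebra_simps)
  qed
  with \<eta> show ?thesis using that by blast
qed

lemma armijo_step_exists:
  assumes "0 < \<delta>" "x \<in> D" "z \<in> D" "\<delta> \<le> f' x \<bullet> (x - z)"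
  shows "\<exists>x'. armijo_step f f' \<beta> \<theta> x z x'"
proof -
  obtain \<eta> where \<eta>: "0 < \<eta>"
    and ok: "\<And>m. \<theta> ^ m \<le> \<eta> \<Longrightarrow> armijo_ok f f' \<beta> \<theta> x z m"
    using armijo_ok_small_steps[OF assms(1)] assms(2-4) by metis
  obtain n where "\<theta> ^ n < \<eta>" using real_arch_pow_inv[OF \<eta> theta(2)] by blast
  then have ex: "\<exists>m. armijo_ok f f' \<beta> \<theta> x z m" using ok less_imp_le by blast
  define m where "m = (LEAST m. armijo_ok f f' \<beta> \<theta> x z m)"
  have "armijo_ok f f' \<beta> \<theta> x z m" unfolding m_def by (rule LeastI_ex[OF ex])
  moreover have "\<forall>m'<m. \<not> armijo_ok f f' \<beta> \<theta> x z m'"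
    unfolding m_def using not_less_Least by blast
  ultimately show ?thesis unfolding armijo_step_def by blast
qed

lemma armijo_step_in_D:
  assumes "x \<in> D" "z \<in> D" "armijo_step f f' \<beta> \<theta> x z x'"
  shows "x' \<in> D"
proof -
  obtain m where "x' = x + (\<theta> ^ m) *\<^sub>R (z - x)" using assms(3) unfolding armijo_step_def by blast
  moreover have "0 \<le> \<theta> ^ m" "\<theta> ^ m \<le> 1" using theta by (auto simp: power_le_one)
  ultimately show ?thesis using segment_in_D[OF assms(1,2)] by simp
qed

text \<open>The minimality of the Armijo exponent \<open>m\<close> keeps the accepted step \<open>\<theta>\<^sup>m\<close> above
  \<open>min 1 (\<theta> \<eta>)\<close>, which bounds the decrease from below independently of \<open>x\<close> and \<open>z\<close>.\<close>

lemma armijo_step_sufficient_decrease: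
  assumes "0 < \<delta>"
  obtains c where "0 < c"
    "\<And>x z x'. x \<in> D \<Longrightarrow> z \<in> D \<Longrightarrow> \<delta> \<le> f' x \<bullet> (x - z) \<Longrightarrow>
       armijo_step f f' \<beta> \<theta> x z x' \<Longrightarrow> f x' \<le> f x - c"
proof -
  obtain \<eta> where \<eta>: "0 < \<eta>"
    and ok: "\<And>x z m. x \<in> D \<Longrightarrow> z \<in> D \<Longrightarrow> \<delta> \<le> f' x \<bullet> (x - z) \<Longrightarrow> \<theta> ^ m \<le> \<eta> \<Longrightarrow>
       armijo_ok f f' \<beta> \<theta> x z m"
    using armijo_ok_small_steps[OF assms] by blast
  define c where "c = \<beta> * min 1 (\<theta> * \<eta>) * \<delta>"
  have "f x' \<le> f x - c"
    if x: "x \<in> D" and z: "z \<in> D" and gap: "\<delta> \<le> f' x \<bullet> (x - z)"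
      and step: "armijo_step f f' \<beta> \<theta> x z x'" for x z x'
  proof -
    obtain m where accepted: "armijo_ok f f' \<beta> \<theta> x z m"
      and least: "\<forall>m'<m. \<not> armijo_ok f f' \<beta> \<theta> x z m'"
      and x': "x' = x + (\<theta> ^ m) *\<^sub>R (z - x)"
      using step unfolding armijo_step_def by blast
    have large: "min 1 (\<theta> * \<eta>) \<le> \<theta> ^ m"
    proof (cases m)
      case (Suc k)
      then have "\<not> armijo_ok f f' \<beta> \<theta> x z k" using least by simp
      then have "\<eta> < \<theta> ^ k" using ok[OF x z gap, of k] by (meson not_le)
      then have "\<theta> * \<eta> \<le> \<theta> * \<theta> ^ k" using theta by simp
      then show ?thesis using Suc by (simp add: min.coboundedI2)
    qed simp
    have "\<beta> * \<theta> ^ m * (f' x \<bullet> (z - x)) \<le> \<beta> * \<theta> ^ m * - \<delta>"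
      using gap beta theta by (intro mult_left_mono) (auto simp: inner_diff_right)
    also have "\<dots> \<le> - c"
      unfolding c_def using large beta assms by (simp add: mult_right_mono)
    finally show ?thesis using accepted x' unfolding armijo_ok_def by simp
  qed
  moreover have "0 < c" using beta theta \<eta> assms by (simp add: c_def)
  ultimately show ?thesis using that by blast
qed

lemma cgmi_iter_in_D: "x \<in> D \<Longrightarrow> cgmi_iter f f' D \<beta> \<theta> \<delta> x z x' \<Longrightarrow> x' \<in> D"
  using armijo_step_in_D unfolding cgmi_iter_def by blast

lemma cgmi_iter_decrease:
  assumes "0 < \<delta>"
  obtains c where "0 < c"
    "\<And>x z x'. x \<in> D \<Longrightarrow> cgmi_iter f f' D \<beta> \<theta> \<delta> x z x' \<Longrightarrow> x' \<in> D \<and> f x' \<le> f x - c"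
  using armijo_step_sufficient_decrease[OF assms] cgmi_iter_in_D
  unfolding cgmi_iter_def by metis

lemma cgmi_stage_terminates:
  assumes "0 < \<delta>" and "x 0 \<in> D"
    and iter: "\<forall>k. \<not> mu_gap f' D (x k) < \<delta> \<longrightarrow> cgmi_iter f f' D \<beta> \<theta> \<delta> (x k) (z k) (x (Suc k))"
  shows "\<exists>k. mu_gap f' D (x k) < \<delta>"
proof (rule ccontr)
  assume "\<not> ?thesis"
  with iter have all: "\<And>k. cgmi_iter f f' D \<beta> \<theta> \<delta> (x k) (z k) (x (Suc k))" by blast
  obtain c where c: "0 < c"
    and dec: "\<And>x z x'. x \<in> D \<Longrightarrow> cgmi_iter f f' D \<beta> \<theta> \<delta> x z x' \<Longrightarrow> x' \<in> D \<and> f x' \<le> f x - c"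
    using cgmi_iter_decrease[OF assms(1)] by blast
  have descent: "x k \<in> D \<and> f (x k) \<le> f (x 0) - real k * c" for k
  proof (induction k)
    case (Suc k)
    then have "x (Suc k) \<in> D \<and> f (x (Suc k)) \<le> f (x k) - c" using dec all by blast
    with Suc show ?case by (simp add: algebra_simps)
  qed (use assms(2) in simp)
  obtain L where L: "\<And>y. y \<in> D \<Longrightarrow> L \<le> f y" using f_bounded_below by blast
  obtain k where "f (x 0) - L < real k * c" using ex_less_of_nat_mult[OF c] by blast
  with descent[of k] L[of "x k"] show False by linarith
qed

lemma cgmi_stage_end:
  assumes "w \<in> D" "0 < \<delta>" "cgmi_stage f f' D \<beta> \<theta> \<delta> w w'"
  shows "w' \<in> D \<and> f w' \<le> f w \<and> mu_gap f' D w' < \<delta>"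
proof -
  obtain K x z where x0: "x 0 = w"
    and iter: "\<forall>k<K. cgmi_iter f f' D \<beta> \<theta> \<delta> (x k) (z k) (x (Suc k))"
    and stop: "mu_gap f' D (x K) < \<delta>" and w': "w' = x K"
    using assms(3) unfolding cgmi_stage_def by blast
  obtain c where c: "0 < c"
    and dec: "\<And>x z x'. x \<in> D \<Longrightarrow> cgmi_iter f f' D \<beta> \<theta> \<delta> x z x' \<Longrightarrow> x' \<in> D \<and> f x' \<le> f x - c"
    using cgmi_iter_decrease[OF assms(2)] by blast
  have "k \<le> K \<longrightarrow> x k \<in> D \<and> f (x k) \<le> f w" for k
  proof (induction k)
    case (Suc k)
    show ?case
    proof
      assume "Suc k \<le> K"
      with Suc iter have "x k \<in> D" "f (x k) \<le> f w"
        and it: "cgmi_iter f f' D \<beta> \<theta> \<delta> (x k) (z k) (x (Suc k))" by auto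
      with dec[OF _ it] c show "x (Suc k) \<in> D \<and> f (x (Suc k)) \<le> f w" by fastforce
    qed
  qed (use x0 assms(1) in simp)
  then show ?thesis using stop w' by auto
qed

lemma cgmi_iter_exists:
  assumes "0 < \<delta>" "x \<in> D" "\<not> mu_gap f' D x < \<delta>"
  shows "\<exists>z x'. cgmi_iter f f' D \<beta> \<theta> \<delta> x z x'"
proof -
  obtain z where z: "z \<in> D" "mu_gap f' D x = f' x \<bullet> (x - z)" by (metis mu_gap_attained)
  with assms have "\<delta> \<le> f' x \<bullet> (x - z)" by simp
  with armijo_step_exists[OF assms(1,2) z(1)] z(1) assms(3) show ?thesis
    unfolding cgmi_iter_def by blast
qed

text \<open>A stage is built by iterating from \<open>w\<close> forever (standing still once \<open>\<mu> < \<delta>\<close>) and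
  cutting at the first index where \<open>\<mu> < \<delta>\<close>, which exists by \<open>cgmi_stage_terminates\<close>.\<close>

lemma cgmi_stage_exists:
  assumes "0 < \<delta>" "w \<in> D"
  shows "\<exists>w'. cgmi_stage f f' D \<beta> \<theta> \<delta> w w'"
proof -
  let ?P = "\<lambda>k x. x \<in> D \<and> (k = 0 \<longrightarrow> x = w)"
  let ?Q = "\<lambda>k x x'. \<not> mu_gap f' D x < \<delta> \<longrightarrow> (\<exists>z. cgmi_iter f f' D \<beta> \<theta> \<delta> x z x')"
  have step: "\<exists>x'. ?P (Suc k) x' \<and> ?Q k x x'" if xP: "?P k x" for x k
  proof (cases "mu_gap f' D x < \<delta>")
    case False
    then obtain z x' where "cgmi_iter f f' D \<beta> \<theta> \<delta> x z x'"
      using cgmi_iter_exists[OF assms(1)] xP by blast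
    with cgmi_iter_in_D xP show ?thesis by blast
  qed (use xP in auto)
  obtain x where x: "\<And>k. ?P k (x k) \<and> ?Q k (x k) (x (Suc k))"
    using dependent_nat_choice[of ?P ?Q, OF _ step] assms(2) by blast
  then have "\<forall>k. \<exists>z. \<not> mu_gap f' D (x k) < \<delta> \<longrightarrow> cgmi_iter f f' D \<beta> \<theta> \<delta> (x k) z (x (Suc k))"
    by blast
  then obtain z where iter: "\<forall>k. \<not> mu_gap f' D (x k) < \<delta> \<longrightarrow>
      cgmi_iter f f' D \<beta> \<theta> \<delta> (x k) (z k) (x (Suc k))"
    by (rule choice[THEN exE]) blast
  have x0: "x 0 = w" using x by blast
  obtain k where "mu_gap f' D (x k) < \<delta>"
    using cgmi_stage_terminates[OF assms(1) _ iter] x0 assms(2) by auto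
  define K where "K = (LEAST k. mu_gap f' D (x k) < \<delta>)"
  have "mu_gap f' D (x K) < \<delta>"
    unfolding K_def by (rule LeastI) fact
  moreover have "\<forall>k<K. cgmi_iter f f' D \<beta> \<theta> \<delta> (x k) (z k) (x (Suc k))"
    using iter not_less_Least unfolding K_def by blast
  ultimately show ?thesis
    unfolding cgmi_stage_def using x0 by (intro exI[of _ "x K"] exI[of _ K] exI[of _ x] exI[of _ z]) simp
qed

context
  fixes \<delta> :: "nat \<Rightarrow> real"
  assumes delta_pos: "\<And>p. 0 < \<delta> p"
begin

lemma cgmi_run_exists:
  assumes "w0 \<in> D"
  shows "\<exists>w. w 0 = w0 \<and> cgmi_run f f' D \<beta> \<theta> \<delta> w"
proof -
  let ?P = "\<lambda>p v. v \<in> D \<and> (p = 0 \<longrightarrow> v = w0)"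
  let ?Q = "\<lambda>p. cgmi_stage f f' D \<beta> \<theta> (\<delta> (Suc p))"
  have step: "\<exists>v'. ?P (Suc p) v' \<and> ?Q p v v'" if "?P p v" for v p
    using cgmi_stage_exists[OF delta_pos] cgmi_stage_end[OF _ delta_pos] that by blast
  obtain w where "\<And>p. ?P p (w p) \<and> ?Q p (w p) (w (Suc p))"
    using dependent_nat_choice[of ?P ?Q, OF _ step] assms by blast
  then show ?thesis unfolding cgmi_run_def by auto
qed

lemma cgmi_run_in_D:
  assumes "cgmi_run f f' D \<beta> \<theta> \<delta> w"
  shows "w p \<in> D"
proof (induction p)
  case (Suc p)
  then show ?case using cgmi_stage_end[OF Suc delta_pos] assms unfolding cgmi_run_def by blast
qed (use assms in \<open>simp add: cgmi_run_def\<close>)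

lemma cgmi_run_step:
  assumes "cgmi_run f f' D \<beta> \<theta> \<delta> w"
  shows "f (w (Suc p)) \<le> f (w p)" and "mu_gap f' D (w (Suc p)) < \<delta> (Suc p)"
  using cgmi_stage_end[OF cgmi_run_in_D[OF assms] delta_pos] assms unfolding cgmi_run_def
  by blast+

lemma cgmi_run_has_limit_point:
  assumes "cgmi_run f f' D \<beta> \<theta> \<delta> w"
  shows "\<exists>l. is_limit_point w l"
proof -
  have "\<forall>p. w p \<in> D" using cgmi_run_in_D[OF assms] by blast
  then obtain l r where "strict_mono r" "(w \<circ> r) \<longlonglongrightarrow> l"
    using seq_compactE[OF compact_imp_seq_compact[OF compact_D]] by blast
  then show ?thesis unfolding is_limit_point_def by blast
qed

text \<open>Along a subsequence \<open>w \<circ> r\<close> we have \<open>\<langle>f'(w\<^sup>p), w\<^sup>p - y\<rangle> \<le> \<mu>(w\<^sup>p) < \<delta>\<^sub>p\<close> for \<open>p \<ge> 1\<close>;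
  the left side tends to \<open>\<langle>f'(l), l - y\<rangle>\<close> and the right side to \<open>0\<close>.\<close>

lemma cgmi_run_limit_point_stationary:
  assumes delta_lim: "\<delta> \<longlonglongrightarrow> 0" and run: "cgmi_run f f' D \<beta> \<theta> \<delta> w"
    and "is_limit_point w l"
  shows "l \<in> stat_set f' D"
proof -
  obtain r where r: "strict_mono r" and lim: "(w \<circ> r) \<longlonglongrightarrow> l"
    using assms(3) unfolding is_limit_point_def by blast
  have lD: "l \<in> D"
    using closed_sequentially[OF closed_D _ lim] cgmi_run_in_D[OF run] by simp
  have "0 \<le> f' l \<bullet> (y - l)" if y: "y \<in> D" for y
  proof -
    have "isCont f' l" using continuous_f' by (simp add: continuous_on_eq_continuous_at)
    then have gap_lim: "(\<lambda>p. f' ((w \<circ> r) p) \<bullet> ((w \<circ> r) p - y)) \<longlonglongrightarrow> f' l \<bullet> (l - y)"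
      by (intro tendsto_intros isCont_tendsto_compose[OF _ lim] lim)
    have "\<forall>\<^sub>F p in sequentially. f' ((w \<circ> r) p) \<bullet> ((w \<circ> r) p - y) \<le> (\<delta> \<circ> r) p"
    proof (rule eventually_sequentiallyI[of 1])
      fix p :: nat assume "1 \<le> p"
      then have "1 \<le> r p" using seq_suble[OF r, of p] by linarith
      then obtain q where q: "r p = Suc q" by (cases "r p") auto
      show "f' ((w \<circ> r) p) \<bullet> ((w \<circ> r) p - y) \<le> (\<delta> \<circ> r) p"
        using inner_le_mu_gap[OF y, of "w (Suc q)"] cgmi_run_step(2)[OF run, of q] q by simp
    qed
    then have "f' l \<bullet> (l - y) \<le> 0"
      using tendsto_le[OF trivial_limit_sequentially LIMSEQ_subseq_LIMSEQ[OF delta_lim r] gap_lim]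
      by simp
    then show ?thesis by (simp add: inner_diff_right)
  qed
  with lD show ?thesis unfolding stat_set_def by blast
qed

lemma cgmi_run_tendsto_opt_val:
  assumes "\<delta> \<longlonglongrightarrow> 0" and "pseudo_convex_on f f' D" and run: "cgmi_run f f' D \<beta> \<theta> \<delta> w"
  shows "(\<lambda>p. f (w p)) \<longlonglongrightarrow> opt_val f D"
proof -
  obtain l r where l: "is_limit_point w l" and r: "strict_mono r" and lim: "(w \<circ> r) \<longlonglongrightarrow> l"
    using cgmi_run_has_limit_point[OF run] unfolding is_limit_point_def by blast
  have "isCont f l" using continuous_on_f[of UNIV] by (simp add: continuous_on_eq_continuous_at)
  then have "((\<lambda>p. f (w p)) \<circ> r) \<longlonglongrightarrow> f l"
    using isCont_tendsto_compose[OF _ lim] by (simp add: comp_def)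
  moreover have "decseq (\<lambda>p. f (w p))" using cgmi_run_step(1)[OF run] by (simp add: decseq_Suc_iff)
  moreover have "f l = opt_val f D"
    using stationary_point_in_sol_set[OF assms(2) cgmi_run_limit_point_stationary[OF assms(1) run l]]
    unfolding sol_set_def by simp
  ultimately show ?thesis using decseq_tendsto_subseq_limit r by metis
qed

end

end

theorem theorem4p1:
  fixes D :: "(real ^ 'n) set" and f :: "real ^ 'n \<Rightarrow> real" and f' :: "real ^ 'n \<Rightarrow> real ^ 'n"
    and \<beta> \<theta> :: real and \<delta> :: "nat \<Rightarrow> real"
  assumes D: "D \<noteq> {}" "convex D" "closed D" "bounded D"
    and deriv: "\<And>x. (f has_derivative (\<lambda>h. f' x \<bullet> h)) (at x)"
    and cont: "continuous_on UNIV f'"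
    and beta: "0 < \<beta>" "\<beta> < 1"
    and theta: "0 < \<theta>" "\<theta> < 1"
    and delta: "\<And>p. \<delta> p > 0" "\<delta> \<longlonglongrightarrow> 0"
  shows
    \<comment> \<open>(i) every stage terminates after finitely many changes of k, and the sequence w is infinite\<close>
    "(\<forall>p\<ge>1. \<forall>w0\<in>D. \<forall>x z. x 0 = w0 \<and>
          (\<forall>k. \<not> mu_gap f' D (x k) < \<delta> p \<longrightarrow> cgmi_iter f f' D \<beta> \<theta> (\<delta> p) (x k) (z k) (x (Suc k)))
          \<longrightarrow> (\<exists>k. mu_gap f' D (x k) < \<delta> p))
     \<and> (\<forall>w0\<in>D. \<exists>w. w 0 = w0 \<and> cgmi_run f f' D \<beta> \<theta> \<delta> w)
     \<comment> \<open>(ii) limit points exist and lie in D0\<close>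
     \<and> (\<forall>w. cgmi_run f f' D \<beta> \<theta> \<delta> w \<longrightarrow>
          (\<exists>l. is_limit_point w l) \<and> (\<forall>l. is_limit_point w l \<longrightarrow> l \<in> stat_set f' D))
     \<comment> \<open>(iii) under pseudo-convexity, limit points lie in D* and f(w p) tends to f*\<close>
     \<and> (pseudo_convex_on f f' D \<longrightarrow>
          (\<forall>w. cgmi_run f f' D \<beta> \<theta> \<delta> w \<longrightarrow>
             (\<forall>l. is_limit_point w l \<longrightarrow> l \<in> sol_set f D) \<and>
             (\<lambda>p. f (w p)) \<longlonglongrightarrow> opt_val f D))"
proof -
  interpret cgmi_setting D f f' \<beta> \<theta>
    by (rule cgmi_setting.intro) (use D deriv cont beta theta in auto)
  note stationary = cgmi_run_limit_point_stationary[OF delta]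
  show ?thesis
    apply (intro conjI)
    subgoal using cgmi_stage_terminates[OF delta(1)] by blast
    subgoal using cgmi_run_exists[of \<delta>, OF delta(1)] by blast
    subgoal using cgmi_run_has_limit_point[of \<delta>, OF delta(1)] stationary by blast
    subgoal by (auto intro: stationary_point_in_sol_set[OF _ stationary] cgmi_run_tendsto_opt_val[OF delta])
    done
qed

end
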